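(* Consider the following slotted system. There are $N\ge 2$ users and slots $t=1,\dots,T$. In every slot, independently, the BS schedules one user chosen uniformly at random among the $N$ users. An adversary uses a blocking matrix $\sigma\in\{0,1\}^{N\times T}$, where $\sigma_i(t)=0$ means user $i$'s channel is blocked in slot $t$. Feasibility means $\sum_{i,t}(1-\sigma_i(t))\le\alpha T$ and at most one user is blocked per slot, where $0<\alpha<1$ and $\alpha T\in\mathbb{Z}$. The ages satisfy $a_i(1)=1$ and $a_i(t+1)=1$ if user $i$ is scheduled in slot $t$ and $\sigma_i(t)=1$, and $a_i(t+1)=a_i(t)+1$ otherwise. The average age is $\Delta^{\sigma}=\frac{1}{T}\sum_{t=1}^T\frac1N\sum_{i=1}^N\mathbb{E}[a_i(t)]$. Then for every feasible $\sigma$, $\Delta^{\sigma}\le \frac{T+1}{2N}+(N-1)$.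
   Context: The expectation is over the random scheduling. *)

theory Defs
  imports "HOL-Probability.Probability"
begin

text \<open>Users are 1..N, slots are 1..T. A schedule s maps each slot t to the
user s t scheduled in that slot. The blocking matrix sigma i t is in {0,1};
sigma i t = 0 means user i is blocked in slot t.\<close>

text \<open>age_aux sigma s i k is the age a_i(k+1).\<close>
primrec age_aux :: "(nat \<Rightarrow> nat \<Rightarrow> int) \<Rightarrow> (nat \<Rightarrow> nat) \<Rightarrow> nat \<Rightarrow> nat \<Rightarrow> nat" where
  "age_aux \<sigma> s i 0 = 1"
| "age_aux \<sigma> s i (Suc k) =
     (if s (Suc k) = i \<and> \<sigma> i (Suc k) = 1 then 1 else age_aux \<sigma> s i k + 1)"

definition age :: "(nat \<Rightarrow> nat \<Rightarrow> int) \<Rightarrow> (nat \<Rightarrow> nat) \<Rightarrow> nat \<Rightarrow> nat \<Rightarrow> nat" where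
  "age \<sigma> s i t = age_aux \<sigma> s i (t - 1)"

definition sched_pmf :: "nat \<Rightarrow> nat \<Rightarrow> (nat \<Rightarrow> nat) pmf" where
  "sched_pmf N T = Pi_pmf {1..T} 0 (\<lambda>_. pmf_of_set {1..N})"

definition feasible :: "nat \<Rightarrow> nat \<Rightarrow> real \<Rightarrow> (nat \<Rightarrow> nat \<Rightarrow> int) \<Rightarrow> bool" where
  "feasible N T \<alpha> \<sigma> \<longleftrightarrow>
     (\<forall>i\<in>{1..N}. \<forall>t\<in>{1..T}. \<sigma> i t \<in> {0, 1}) \<and>
     real_of_int (\<Sum>i\<in>{1..N}. \<Sum>t\<in>{1..T}. 1 - \<sigma> i t) \<le> \<alpha> * real T \<and>
     (\<forall>t\<in>{1..T}. card {i\<in>{1..N}. \<sigma> i t = 0} \<le> 1)"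

definition avg_age :: "nat \<Rightarrow> nat \<Rightarrow> (nat \<Rightarrow> nat \<Rightarrow> int) \<Rightarrow> real" where
  "avg_age N T \<sigma> = (1 / real T) * (\<Sum>t\<in>{1..T}. (1 / real N) *
      (\<Sum>i\<in>{1..N}. measure_pmf.expectation (sched_pmf N T) (\<lambda>s. real (age \<sigma> s i t))))"

end

theory Submission
  imports Defs
begin

text \<open>The age a_i(t) counts the k < t such that user i had no successful update in the
last k slots t - k, ..., t - 1, so it is a sum of products of indicators over windows of slots.
Slots are scheduled independently, so each product has expectation \<Prod> (1 - 1/N) over the
unblocked slots of the window. As at most one user is blocked per slot, summing over users gives
at most 1 + (N - 1)(1 - 1/N)^k for a window of length k; the geometric series then bounds
\<Sum>_i E a_i(t) by t + (N - 1) N, and averaging over t yields the claim.\<close>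

lemma age_aux_eq_sum_prod:
  "of_nat (age_aux \<sigma> s i m) =
     (\<Sum>k<Suc m. \<Prod>u\<in>{Suc m - k..<Suc m}. if s u = i \<and> \<sigma> i u = 1 then 0 else 1 :: 'a::comm_semiring_1)"
proof (induction m)
  case 0
  then show ?case by simp
next
  case (Suc m)
  define h :: "nat \<Rightarrow> 'a" where "h u = (if s u = i \<and> \<sigma> i u = 1 then 0 else 1)" for u
  have "(\<Sum>k<Suc (Suc m). \<Prod>u\<in>{Suc (Suc m) - k..<Suc (Suc m)}. h u)
      = 1 + (\<Sum>k<Suc m. \<Prod>u\<in>{Suc m - k..<Suc (Suc m)}. h u)"
    by (subst sum.lessThan_Suc_shift) simp
  also have "\<dots> = 1 + h (Suc m) * (\<Sum>k<Suc m. \<Prod>u\<in>{Suc m - k..<Suc m}. h u)"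
    unfolding sum_distrib_left by (intro arg_cong2[where f = "(+)"] sum.cong) (auto simp: mult.commute)
  finally show ?case
    using Suc.IH by (simp add: h_def)
qed

lemma age_eq_sum_prod:
  assumes "t \<ge> 1"
  shows "real (age \<sigma> s i t) = (\<Sum>k<t. \<Prod>u\<in>{t - k..<t}. if s u = i \<and> \<sigma> i u = 1 then 0 else 1)"
  using age_aux_eq_sum_prod[of \<sigma> s i "t - 1"] assms by (simp add: age_def)

lemma expectation_prod_Pi_pmf_subset:
  fixes f :: "'a \<Rightarrow> 'b \<Rightarrow> real"
  assumes "finite A" "W \<subseteq> A"
    and "\<And>x. x \<in> W \<Longrightarrow> integrable (measure_pmf (p x)) (f x)"
    and "\<And>x y. x \<in> W \<Longrightarrow> y \<in> set_pmf (p x) \<Longrightarrow> f x y \<ge> 0"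
  shows "measure_pmf.expectation (Pi_pmf A dflt p) (\<lambda>y. \<Prod>x\<in>W. f x (y x))
           = (\<Prod>x\<in>W. measure_pmf.expectation (p x) (f x))"
proof -
  have "finite W"
    using assms(1,2) by (rule finite_subset[rotated])
  have restrict_W: "(\<Prod>x\<in>W. f x (if x \<in> W then y x else dflt)) = (\<Prod>x\<in>W. f x (y x))" for y
    by (rule prod.cong) simp_all
  have "measure_pmf.expectation (Pi_pmf A dflt p) (\<lambda>y. \<Prod>x\<in>W. f x (y x))
      = measure_pmf.expectation (Pi_pmf W dflt p) (\<lambda>y. \<Prod>x\<in>W. f x (y x))"
    by (simp add: Pi_pmf_subset[OF assms(1,2)] restrict_W)
  also have "\<dots> = (\<Prod>x\<in>W. measure_pmf.expectation (p x) (f x))"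
    using \<open>finite W\<close> assms(3,4) by (rule expectation_prod_Pi_pmf)
  finally show ?thesis .
qed

lemma expectation_pmf_of_set_not_eq:
  assumes "finite A" "i \<in> A"
  shows "measure_pmf.expectation (pmf_of_set A) (\<lambda>v. if v = i then 0 else 1) = 1 - 1 / card A"
proof -
  have "A \<noteq> {}" and "card A \<ge> 1"
    using assms by (auto simp: Suc_le_eq card_gt_0_iff)
  have "(\<Sum>v\<in>A. if v = i then 0 else 1 :: real) = real (card A) - 1"
    using assms \<open>card A \<ge> 1\<close>
    by (simp add: sum.If_cases Diff_eq[symmetric] card_Diff_singleton of_nat_diff)
  then show ?thesis
    using \<open>card A \<ge> 1\<close>
    by (simp add: integral_pmf_of_set[OF \<open>A \<noteq> {}\<close> assms(1)] field_simps)
qed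

lemma expectation_age:
  assumes "i \<in> {1..N}" "1 \<le> t" "t \<le> T"
  shows "measure_pmf.expectation (sched_pmf N T) (\<lambda>s. real (age \<sigma> s i t))
           = (\<Sum>k<t. \<Prod>u\<in>{t - k..<t}. if \<sigma> i u = 1 then 1 - 1 / real N else 1)"
proof -
  define unserved :: "nat \<Rightarrow> nat \<Rightarrow> real" where
    "unserved u v = (if v = i \<and> \<sigma> i u = 1 then 0 else 1)" for u v
  have unserved_exp: "measure_pmf.expectation (pmf_of_set {1..N}) (unserved u)
      = (if \<sigma> i u = 1 then 1 - 1 / real N else 1)" for u
  proof (cases "\<sigma> i u = 1")
    case True
    then have "unserved u = (\<lambda>v. if v = i then 0 else 1)"
      by (simp add: unserved_def fun_eq_iff)
    then show ?thesis
      using True expectation_pmf_of_set_not_eq[of "{1..N}" i] assms(1) by simp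
  next
    case False
    then have "unserved u = (\<lambda>_. 1)"
      by (simp add: unserved_def fun_eq_iff)
    then show ?thesis
      using False by simp
  qed
  have "{1..N} \<noteq> {}"
    using assms(1) by auto
  have window: "{t - k..<t} \<subseteq> {1..T}" if "k < t" for k
    using that assms(3) by auto
  have "measure_pmf.expectation (sched_pmf N T) (\<lambda>s. real (age \<sigma> s i t))
      = (\<Sum>k<t. measure_pmf.expectation (sched_pmf N T) (\<lambda>s. \<Prod>u\<in>{t - k..<t}. unserved u (s u)))"
    unfolding age_eq_sum_prod[OF assms(2)] unserved_def
    by (intro Bochner_Integration.integral_sum measure_pmf.integrable_const_bound[where B = 1] AE_I2)
       (auto simp: abs_prod intro: prod_le_1)
  also have "\<dots> = (\<Sum>k<t. \<Prod>u\<in>{t - k..<t}. measure_pmf.expectation (pmf_of_set {1..N}) (unserved u))"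
    unfolding sched_pmf_def
    by (intro sum.cong refl expectation_prod_Pi_pmf_subset window)
       (use \<open>{1..N} \<noteq> {}\<close> in \<open>auto simp: unserved_def integrable_measure_pmf_finite\<close>)
  finally show ?thesis
    by (simp only: unserved_exp)
qed

text \<open>A new slot multiplies every term by p, except the at most one exempt term, which
exceeds p times its old value by at most 1 - p.\<close>

lemma sum_prod_if_le_at_most_one_exempt:
  fixes p :: real and U :: "'i \<Rightarrow> 'u \<Rightarrow> bool"
  assumes "finite A" "finite W" "0 \<le> p" "p \<le> 1"
    and "\<And>u. u \<in> W \<Longrightarrow> card {i\<in>A. \<not> U i u} \<le> 1"
  shows "(\<Sum>i\<in>A. \<Prod>u\<in>W. if U i u then p else 1) \<le> 1 + (real (card A) - 1) * p ^ card W"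
  using assms(2,5)
proof (induction W rule: finite_induct)
  case empty
  then show ?case by simp
next
  case (insert x W)
  define P where "P i = (\<Prod>u\<in>W. if U i u then p else 1)" for i
  have P_le_1: "P i \<le> 1" for i
    unfolding P_def using assms(3,4) by (auto intro: prod_le_1)
  have step: "(if U i x then p else 1) * P i \<le> p * P i + (if U i x then 0 else 1 - p)" for i
  proof -
    have "0 \<le> (1 - p) * (1 - P i)"
      using P_le_1[of i] assms(4) by simp
    then show ?thesis
      by (simp add: algebra_simps)
  qed
  have "(\<Sum>i\<in>A. \<Prod>u\<in>insert x W. if U i u then p else 1) = (\<Sum>i\<in>A. (if U i x then p else 1) * P i)"
    using insert.hyps by (simp add: P_def)
  also have "\<dots> \<le> (\<Sum>i\<in>A. p * P i + (if U i x then 0 else 1 - p))"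
    by (intro sum_mono step)
  also have "\<dots> = p * (\<Sum>i\<in>A. P i) + (1 - p) * real (card {i\<in>A. \<not> U i x})"
    using assms(1) by (simp add: sum.distrib sum_distrib_left sum.If_cases Int_def)
  also have "\<dots> \<le> p * (1 + (real (card A) - 1) * p ^ card W) + (1 - p)"
    using insert assms(3,4) unfolding P_def
    by (intro add_mono mult_left_mono mult_right_le_one_le) auto
  also have "\<dots> = 1 + (real (card A) - 1) * p ^ card (insert x W)"
    using insert.hyps by (simp add: algebra_simps)
  finally show ?case .
qed

lemma feasible_at_most_one_blocked:
  assumes "feasible N T \<alpha> \<sigma>" "u \<in> {1..T}"
  shows "card {i\<in>{1..N}. \<not> \<sigma> i u = 1} \<le> 1"
proof -
  have "\<sigma> i u \<in> {0, 1}" if "i \<in> {1..N}" for i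
    using assms that unfolding feasible_def by blast
  then have "{i\<in>{1..N}. \<not> \<sigma> i u = 1} = {i\<in>{1..N}. \<sigma> i u = 0}"
    by auto
  then show ?thesis
    using assms unfolding feasible_def by auto
qed

lemma geometric_sum_le:
  fixes p :: real
  assumes "0 \<le> p" "p < 1"
  shows "(\<Sum>k<n. p ^ k) \<le> 1 / (1 - p)"
proof -
  have "(1 - p) * (\<Sum>k<n. p ^ k) \<le> 1"
    using assms by (simp add: one_diff_power_eq[symmetric])
  then show ?thesis
    using assms by (simp add: field_simps)
qed

lemma sum_expectation_age_le:
  assumes "N \<ge> 1" "1 \<le> t" "t \<le> T"
    and blocked: "\<And>u. u \<in> {1..T} \<Longrightarrow> card {i\<in>{1..N}. \<not> \<sigma> i u = 1} \<le> 1"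
  shows "(\<Sum>i\<in>{1..N}. measure_pmf.expectation (sched_pmf N T) (\<lambda>s. real (age \<sigma> s i t)))
           \<le> real t + (real N - 1) * real N"
proof -
  define p where "p = 1 - 1 / real N"
  have p: "0 \<le> p" "p < 1"
    using assms(1) by (auto simp: p_def)
  have "(\<Sum>i\<in>{1..N}. measure_pmf.expectation (sched_pmf N T) (\<lambda>s. real (age \<sigma> s i t)))
      = (\<Sum>k<t. \<Sum>i\<in>{1..N}. \<Prod>u\<in>{t - k..<t}. if \<sigma> i u = 1 then p else 1)"
    unfolding p_def using assms(2,3) by (simp add: expectation_age) (rule sum.swap)
  also have "\<dots> \<le> (\<Sum>k<t. 1 + (real N - 1) * p ^ k)"
  proof (rule sum_mono)
    fix k
    assume "k \<in> {..<t}"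
    then have "card {i\<in>{1..N}. \<not> \<sigma> i u = 1} \<le> 1" if "u \<in> {t - k..<t}" for u
      using that assms(3) by (intro blocked) auto
    then show "(\<Sum>i\<in>{1..N}. \<Prod>u\<in>{t - k..<t}. if \<sigma> i u = 1 then p else 1)
        \<le> 1 + (real N - 1) * p ^ k"
      using sum_prod_if_le_at_most_one_exempt[of "{1..N}" "{t - k..<t}" p] p \<open>k \<in> {..<t}\<close> by simp
  qed
  also have "\<dots> = real t + (real N - 1) * (\<Sum>k<t. p ^ k)"
    by (simp add: sum.distrib sum_distrib_left)
  also have "\<dots> \<le> real t + (real N - 1) * real N"
    using geometric_sum_le[OF p, of t] assms(1) by (simp add: p_def mult_left_mono)
  finally show ?thesis .
qed

theorem theorem2:
  fixes N T :: nat and \<alpha> :: real and \<sigma> :: "nat \<Rightarrow> nat \<Rightarrow> int"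
  assumes "N \<ge> 2" and "T \<ge> 1"
    and "0 < \<alpha>" and "\<alpha> < 1" and "\<alpha> * real T \<in> \<int>"
    and "feasible N T \<alpha> \<sigma>"
  shows "avg_age N T \<sigma> \<le> (real T + 1) / (2 * real N) + (real N - 1)"
proof -
  have per_slot: "(\<Sum>i\<in>{1..N}. measure_pmf.expectation (sched_pmf N T) (\<lambda>s. real (age \<sigma> s i t)))
      \<le> real t + (real N - 1) * real N" if "t \<in> {1..T}" for t
    using that assms(1) feasible_at_most_one_blocked[OF assms(6)]
    by (intro sum_expectation_age_le) auto
  have "avg_age N T \<sigma> \<le> 1 / real T * (\<Sum>t\<in>{1..T}. 1 / real N * (real t + (real N - 1) * real N))"
    unfolding avg_age_def by (intro mult_left_mono sum_mono per_slot) auto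
  also have "\<dots> = 1 / real T * (1 / real N * ((\<Sum>t\<in>{1..T}. real t) + real T * ((real N - 1) * real N)))"
    unfolding sum_distrib_left[symmetric] sum.distrib by simp
  also have "\<dots> = (real T + 1) / (2 * real N) + (real N - 1)"
    using assms(1,2) double_gauss_sum_from_Suc_0[of T, where 'a = real] by (simp add: field_simps)
  finally show ?thesis .
qed

end
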